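(* Let $A=A_1\cdots A_n$ be a string over $\Sigma$, $\mathcal R\subseteq\Sigma\times\Sigma$, $B\ge1$, and let $G=(V,E)$ be the graph defined below. Then for every $i\in\{1,\dots,n\}$ and every $v\in V$, at least one of $V_{-v}\cap S_i=\emptyset$, $V_{+v}\cap S_i=\emptyset$, or $v\in S_i$ holds. Moreover, for every $v\in V$, the number of indices $i\in\{1,\dots,n\}$ with both $V_{-v}\cap S_i\ne\emptyset$ and $V_{+v}\cap S_i\neq\emptyset$ is at most $6B$.
   Context: An interval is a set of integers $[a,b]=\{a,\dots,b\}$ with $a\le b$, with endpoints $l([a,b])=a$, $r([a,b])=b$. A pseudo-interval is an interval or $\emptyset$. A pseudo-interval $I'$ is strictly inside an interval $I$ if $I'\subseteq I$ and $\{l(I),r(I)\}\cap I'=\emptyset$. A triple $(I,H,L)$ of pseudo-intervals is well-ordered if (a) $I\ne\emptyset$, $l(I)<r(I)$; (b) $H\neq\emptyset$, $l(H)<r(H)$; (c) $H$ and $L$ are strictly inside $I$; (d) $H\cap L=\emptyset$. For well-ordered triples, $(I,H,L)\preceq(I',H',L')$ iff $(I,H,L)=(I',H',L')$, or $I'\subseteq H$, or ($I=I'$, $H=H'$, $L=\emptyset$), or ($I=I'$, $H=H'$, $L\ne\emptyset\ne L'$, $r(L)<l(L')$); write $x\prec y$ if $x\preceq y$ and $x\neq y$. The vertex set $V$ consists of all lists $((I_1,H_1,L_1),\dots,(I_k,H_k,L_k))$ of well-ordered triples with $1\le k\le B$ such that: (i) $I_j\subseteq[0,n+1]$ and $H_j,L_j\subseteq[1,n]$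 for all $j$; (ii) $(A_{l(H_j)},A_{r(H_j)})\in\mathcal R$ for all $j$; (iii) $(A_{l(L_j)},A_{r(L_j)})\in\mathcal R$ for all $j$ with $L_j\ne\emptyset$; (iv) $I_{j'}\subseteq L_j$ for all $j<j'$. A list $v=(x_1,\dots,x_k)$ is lexicographically strictly smaller than $v'=(x'_1,\dots,x'_{k'})$ if $v$ is a proper prefix of $v'$, or $x_j\prec x'_j$ for the first index $j$ with $x_j\ne x'_j$. $E=\{(v,v'):v \text{ is lexicographically strictly smaller than } v'\}$. For $v\in V$, $V_{-v}=\{u\in V:(u,v)\in E\}$ and $V_{+v}=\{u\in V:(v,u)\in E\}$. For $i\in\{1,\dots,n\}$, $S_i$ is the set of vertices $((I_1,H_1,L_1),\dots,(I_k,H_k,L_k))\in V$ such that $i$ is an endpoint of at least one of the nonempty pseudo-intervals $I_1,H_1,L_1,\dots,I_k,H_k,L_k$. *)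

theory Defs
  imports Main
begin

type_synonym pint = "int set"
type_synonym triple = "pint \<times> pint \<times> pint"

definition is_interval :: "pint \<Rightarrow> bool" where
  "is_interval I \<longleftrightarrow> (\<exists>a b. a \<le> b \<and> I = {a..b})"

definition pseudo_interval :: "pint \<Rightarrow> bool" where
  "pseudo_interval I \<longleftrightarrow> I = {} \<or> is_interval I"

definition lep :: "pint \<Rightarrow> int" where "lep I = Min I"
definition rep :: "pint \<Rightarrow> int" where "rep I = Max I"

definition strictly_inside :: "pint \<Rightarrow> pint \<Rightarrow> bool" where
  "strictly_inside I' I \<longleftrightarrow> I' \<subseteq> I \<and> {lep I, rep I} \<inter> I' = {}"

definition well_ordered :: "triple \<Rightarrow> bool" where
  "well_ordered t = (case t of (I, H, L) \<Rightarrow>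
     pseudo_interval I \<and> pseudo_interval H \<and> pseudo_interval L \<and>
     I \<noteq> {} \<and> lep I < rep I \<and>
     H \<noteq> {} \<and> lep H < rep H \<and>
     strictly_inside H I \<and> strictly_inside L I \<and>
     H \<inter> L = {})"

definition preceq :: "triple \<Rightarrow> triple \<Rightarrow> bool" where
  "preceq t t' = (case t of (I, H, L) \<Rightarrow> case t' of (I', H', L') \<Rightarrow>
     t = t' \<or> I' \<subseteq> H \<or> (I = I' \<and> H = H' \<and> L = {}) \<or>
     (I = I' \<and> H = H' \<and> L \<noteq> {} \<and> L' \<noteq> {} \<and> rep L < lep L'))"

definition prec :: "triple \<Rightarrow> triple \<Rightarrow> bool" where
  "prec t t' \<longleftrightarrow> preceq t t' \<and> t \<noteq> t'"

text \<open>The string A = A_1 ... A_n is a list; A_i is A ! (i - 1).\<close>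
definition chr :: "'a list \<Rightarrow> int \<Rightarrow> 'a" where
  "chr A i = A ! (nat i - 1)"

definition fstI :: "triple \<Rightarrow> pint" where "fstI t = fst t"
definition sndH :: "triple \<Rightarrow> pint" where "sndH t = fst (snd t)"
definition thdL :: "triple \<Rightarrow> pint" where "thdL t = snd (snd t)"

definition vertices :: "'a list \<Rightarrow> ('a \<times> 'a) set \<Rightarrow> nat \<Rightarrow> triple list set" where
  "vertices A R B = {xs. 1 \<le> length xs \<and> length xs \<le> B \<and>
     (\<forall>j < length xs. well_ordered (xs ! j)) \<and>
     (\<forall>j < length xs. fstI (xs ! j) \<subseteq> {0..int (length A) + 1} \<and>
                      sndH (xs ! j) \<subseteq> {1..int (length A)} \<and>
                      thdL (xs ! j) \<subseteq> {1..int (length A)}) \<and>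
     (\<forall>j < length xs. (chr A (lep (sndH (xs ! j))), chr A (rep (sndH (xs ! j)))) \<in> R) \<and>
     (\<forall>j < length xs. thdL (xs ! j) \<noteq> {} \<longrightarrow>
          (chr A (lep (thdL (xs ! j))), chr A (rep (thdL (xs ! j)))) \<in> R) \<and>
     (\<forall>j j'. j < j' \<and> j' < length xs \<longrightarrow> fstI (xs ! j') \<subseteq> thdL (xs ! j))}"

definition lex_less :: "triple list \<Rightarrow> triple list \<Rightarrow> bool" where
  "lex_less v v' \<longleftrightarrow>
     (length v < length v' \<and> v = take (length v) v') \<or>
     (\<exists>j < min (length v) (length v'). take j v = take j v' \<and> v ! j \<noteq> v' ! j \<and>
        prec (v ! j) (v' ! j))"

definition edges :: "'a list \<Rightarrow> ('a \<times> 'a) set \<Rightarrow> nat \<Rightarrow> (triple list \<times> triple list) set" where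
  "edges A R B = {(v, v'). v \<in> vertices A R B \<and> v' \<in> vertices A R B \<and> lex_less v v'}"

definition Vminus :: "'a list \<Rightarrow> ('a \<times> 'a) set \<Rightarrow> nat \<Rightarrow> triple list \<Rightarrow> triple list set" where
  "Vminus A R B v = {u \<in> vertices A R B. (u, v) \<in> edges A R B}"

definition Vplus :: "'a list \<Rightarrow> ('a \<times> 'a) set \<Rightarrow> nat \<Rightarrow> triple list \<Rightarrow> triple list set" where
  "Vplus A R B v = {u \<in> vertices A R B. (v, u) \<in> edges A R B}"

definition endpoint_of :: "int \<Rightarrow> pint \<Rightarrow> bool" where
  "endpoint_of i X \<longleftrightarrow> X \<noteq> {} \<and> (i = lep X \<or> i = rep X)"

definition Sset :: "'a list \<Rightarrow> ('a \<times> 'a) set \<Rightarrow> nat \<Rightarrow> int \<Rightarrow> triple list set" where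
  "Sset A R B i = {xs \<in> vertices A R B. \<exists>j < length xs.
      endpoint_of i (fstI (xs ! j)) \<or> endpoint_of i (sndH (xs ! j)) \<or> endpoint_of i (thdL (xs ! j))}"

end

theory Submission imports Defs begin

text \<open>A vertex is a chain I_1 \<supseteq> L_1 \<supseteq> I_2 \<supseteq> ... \<supseteq> L_k of intervals, each H_j \<subseteq> I_j being
  disjoint from L_j. Let i be an endpoint of none of them. At the first position where a
  lexicographically smaller vertex having i as an endpoint differs from v, the precedence relation
  forces i either to leave the chain right after some L_(j-1), or to lie in I_j \ (H_j \<union> L_j) to
  the left of L_j. A larger such vertex forces i to lie in L_k, or in I_j \ L_j inside H_j, or to
  the right of L_j, or with L_j empty. The level j with i \<in> I_j \ L_j is unique and the L_j are
  nested, so these positions are incompatible. Hence a vertex with members of S_i on both sides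
  lies in S_i itself, and the indices counted in the second claim are endpoints of the at most 3B
  intervals of v.\<close>

definition triple_endpoint :: "int \<Rightarrow> triple \<Rightarrow> bool" where
  "triple_endpoint i t \<longleftrightarrow>
     endpoint_of i (fstI t) \<or> endpoint_of i (sndH t) \<or> endpoint_of i (thdL t)"

definition has_endpoint :: "int \<Rightarrow> triple list \<Rightarrow> bool" where
  "has_endpoint i v \<longleftrightarrow> (\<exists>j<length v. triple_endpoint i (v ! j))"

lemma Sset_eq: "Sset A R B i = {v \<in> vertices A R B. has_endpoint i v}"
  unfolding Sset_def has_endpoint_def triple_endpoint_def by blast

lemma pseudo_interval_finite: "pseudo_interval X \<Longrightarrow> finite X"
  unfolding pseudo_interval_def is_interval_def by auto

lemma endpoint_of_mem: "finite X \<Longrightarrow> endpoint_of i X \<Longrightarrow> i \<in> X"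
  unfolding endpoint_of_def lep_def rep_def using Min_in Max_in by blast

lemma endpoint_of_subset:
  assumes "X \<subseteq> Y" "finite Y" "i \<in> X" "endpoint_of i Y"
  shows "endpoint_of i X"
proof -
  have X: "finite X" "X \<noteq> {}" using assms finite_subset by auto
  have "Min Y \<le> Min X" "Max X \<le> Max Y"
    using assms(1,2) X(2) by (auto intro: Min_antimono Max_mono)
  moreover have "Min X \<le> i" "i \<le> Max X" using X(1) assms(3) by auto
  moreover have "i = Min Y \<or> i = Max Y" using assms(4) unfolding endpoint_of_def lep_def rep_def by blast
  ultimately have "i = Min X \<or> i = Max X" by linarith
  then show ?thesis using X(2) unfolding endpoint_of_def lep_def rep_def by blast
qed

lemma lep_le_rep: "finite X \<Longrightarrow> X \<noteq> {} \<Longrightarrow> lep X \<le> rep X"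
  unfolding lep_def rep_def using Min_in Max_ge by blast

lemma well_orderedD:
  assumes "well_ordered t"
  shows "finite (fstI t)" "finite (sndH t)" "finite (thdL t)"
    "sndH t \<subseteq> fstI t" "thdL t \<subseteq> fstI t" "sndH t \<inter> thdL t = {}"
    "lep (fstI t) \<notin> sndH t" "rep (fstI t) \<notin> sndH t"
  using assms pseudo_interval_finite
  unfolding well_ordered_def fstI_def sndH_def thdL_def strictly_inside_def
  by (auto split: prod.splits)

lemma triple_endpoint_mem: "well_ordered t \<Longrightarrow> triple_endpoint i t \<Longrightarrow> i \<in> fstI t"
  using well_orderedD[of t] endpoint_of_mem unfolding triple_endpoint_def by blast

lemma triple_endpoint_thdL:
  assumes "well_ordered t" "triple_endpoint i t"
    "\<not> endpoint_of i (fstI t)" "\<not> endpoint_of i (sndH t)"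
  shows "i \<in> thdL t"
  using assms well_orderedD(3)[OF assms(1)] endpoint_of_mem
  unfolding triple_endpoint_def by blast

lemma prec_cases:
  assumes "prec t t'"
  obtains (nested) "fstI t' \<subseteq> sndH t"
  | (empty) "fstI t = fstI t'" "sndH t = sndH t'" "thdL t = {}"
  | (shifted) "fstI t = fstI t'" "sndH t = sndH t'" "thdL t \<noteq> {}" "thdL t' \<noteq> {}"
      "rep (thdL t) < lep (thdL t')"
  using assms unfolding prec_def preceq_def fstI_def sndH_def thdL_def
  by (cases t; cases t') auto

lemma endpoint_nested_triple:
  assumes "well_ordered t" "fstI t' \<subseteq> sndH t" "triple_endpoint i t \<or> i \<in> thdL t" "i \<in> fstI t'"
  shows "endpoint_of i (fstI t')"
proof -
  have iH: "i \<in> sndH t" using assms(2,4) by blast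
  then have "i \<notin> thdL t" using well_orderedD(6)[OF assms(1)] by blast
  moreover have "\<not> endpoint_of i (fstI t)"
    using iH well_orderedD(7,8)[OF assms(1)] unfolding endpoint_of_def by auto
  moreover have "\<not> endpoint_of i (thdL t)"
    using \<open>i \<notin> thdL t\<close> endpoint_of_mem well_orderedD(3)[OF assms(1)] by blast
  ultimately have "endpoint_of i (sndH t)" using assms(3) unfolding triple_endpoint_def by blast
  then show ?thesis by (rule endpoint_of_subset[OF assms(2) well_orderedD(2)[OF assms(1)] assms(4)])
qed

lemma verticesD:
  assumes "v \<in> vertices A R B"
  shows "v \<noteq> []" "length v \<le> B" "\<And>j. j < length v \<Longrightarrow> well_ordered (v ! j)"
    "\<And>a b. a < b \<Longrightarrow> b < length v \<Longrightarrow> fstI (v ! b) \<subseteq> thdL (v ! a)"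
  using assms unfolding vertices_def by auto

lemma vertex_fstI_antimono:
  assumes "v \<in> vertices A R B" "a \<le> b" "b < length v" "x \<in> fstI (v ! b)"
  shows "x \<in> fstI (v ! a)"
proof (cases "a = b")
  case False
  then have "x \<in> thdL (v ! a)" using assms verticesD(4)[OF assms(1), of a b] by auto
  moreover have "a < length v" using assms(2,3) by simp
  ultimately show ?thesis using well_orderedD(5)[OF verticesD(3)[OF assms(1)]] by blast
qed (use assms in simp)

lemma vertex_thdL_antimono:
  assumes "v \<in> vertices A R B" "a \<le> b" "b < length v" "x \<in> thdL (v ! b)"
  shows "x \<in> thdL (v ! a)"
proof (cases "a = b")
  case False
  have "x \<in> fstI (v ! b)" using well_orderedD(5)[OF verticesD(3)[OF assms(1)]] assms by auto
  then show ?thesis using False assms verticesD(4)[OF assms(1), of a b] by auto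
qed (use assms in simp)

lemma vertex_exit_level_unique:
  assumes "v \<in> vertices A R B" "a < length v" "b < length v"
    "x \<in> fstI (v ! a)" "x \<notin> thdL (v ! a)" "x \<in> fstI (v ! b)" "x \<notin> thdL (v ! b)"
  shows "a = b"
  using assms verticesD(4)[OF assms(1), of a b] verticesD(4)[OF assms(1), of b a]
  by (cases a b rule: linorder_cases) auto

lemma vertex_endpoint_level:
  assumes "u \<in> vertices A R B" "j \<le> b" "b < length u" "triple_endpoint i (u ! b)"
  shows "(b = j \<and> triple_endpoint i (u ! j)) \<or> i \<in> thdL (u ! j)"
proof (cases "b = j")
  case False
  have "i \<in> fstI (u ! b)" using triple_endpoint_mem verticesD(3)[OF assms(1)] assms by blast
  then show ?thesis using False assms verticesD(4)[OF assms(1), of j b] by auto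
qed (use assms in simp)

lemma vertex_endpoint_level_thdL:
  assumes "u \<in> vertices A R B" "j \<le> b" "b < length u" "triple_endpoint i (u ! b)"
    "fstI (u ! j) = fstI t" "sndH (u ! j) = sndH t" "\<not> triple_endpoint i t"
  shows "i \<in> thdL (u ! j)"
  using vertex_endpoint_level[OF assms(1-4)] triple_endpoint_thdL[OF verticesD(3)[OF assms(1)]]
    assms unfolding triple_endpoint_def by auto

lemma vertex_endpoint_level_fstI:
  assumes "u \<in> vertices A R B" "j \<le> b" "b < length u" "triple_endpoint i (u ! b)"
  shows "i \<in> fstI (u ! j)"
proof -
  have "i \<in> fstI (u ! b)" using triple_endpoint_mem verticesD(3)[OF assms(1)] assms(3,4) by blast
  then show ?thesis using vertex_fstI_antimono[OF assms(1-3)] by blast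
qed

lemma vertex_endpoint_level_prev:
  assumes "u \<in> vertices A R B" "j \<le> b" "b < length u" "triple_endpoint i (u ! b)" "0 < j"
  shows "i \<in> thdL (u ! (j - 1))"
  using vertex_endpoint_level_fstI[OF assms(1-4)] verticesD(4)[OF assms(1), of "j - 1" j] assms
  by auto

lemma lex_less_cases:
  assumes "lex_less u v"
  obtains (prefix) "length u < length v" "take (length u) u = take (length u) v"
  | (differ) j where "j < length u" "j < length v" "take j u = take j v" "prec (u ! j) (v ! j)"
  using assms unfolding lex_less_def by (metis min_less_iff_conj take_all_iff order_refl)

lemma has_endpoint_take:
  assumes "take j u = take j v" "j \<le> length v" "b < j" "b < length u" "triple_endpoint i (u ! b)"
  shows "has_endpoint i v"
proof -
  have "v ! b = u ! b" using assms(1-4) by (metis nth_take)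
  then show ?thesis using assms(2,3,5) unfolding has_endpoint_def by (metis order_less_le_trans)
qed

text \<open>The positions of i described above; list positions are 0-based, so j = 0 stands for
  the paper's first triple (I_1,H_1,L_1).\<close>

definition point_before :: "triple list \<Rightarrow> int \<Rightarrow> bool" where
  "point_before v i \<longleftrightarrow>
     (\<exists>j<length v. i \<notin> fstI (v ! j) \<and> (j = 0 \<or> i \<in> thdL (v ! (j - 1)))) \<or>
     (\<exists>j<length v. i \<in> fstI (v ! j) \<and> i \<notin> sndH (v ! j) \<and> i \<notin> thdL (v ! j) \<and>
        thdL (v ! j) \<noteq> {} \<and> i < lep (thdL (v ! j)))"

definition point_after :: "triple list \<Rightarrow> int \<Rightarrow> bool" where
  "point_after v i \<longleftrightarrow>
     i \<in> thdL (last v) \<or>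
     (\<exists>j<length v. i \<in> fstI (v ! j) \<and> i \<notin> thdL (v ! j) \<and>
        (i \<in> sndH (v ! j) \<or> thdL (v ! j) = {} \<or> rep (thdL (v ! j)) < i))"

lemma lex_less_point_before:
  assumes u: "u \<in> vertices A R B" and v: "v \<in> vertices A R B" and "lex_less u v"
    and "has_endpoint i u" and not_v: "\<not> has_endpoint i v"
  shows "point_before v i"
proof -
  obtain b where b: "b < length u" "triple_endpoint i (u ! b)"
    using assms(4) unfolding has_endpoint_def by blast
  from \<open>lex_less u v\<close> show ?thesis
  proof (cases rule: lex_less_cases)
    case prefix
    then show ?thesis using has_endpoint_take[OF prefix(2) _ b(1) b] not_v by simp
  next
    case (differ j)
    let ?t = "u ! j" and ?t' = "v ! j"
    have "j \<le> b" using has_endpoint_take[OF differ(3) _ _ b] differ(2) not_v by force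
    have wo: "well_ordered ?t" "well_ordered ?t'"
      using verticesD(3)[OF u] verticesD(3)[OF v] differ(1,2) by auto
    have not_ep: "\<not> triple_endpoint i ?t'" using not_v differ(2) unfolding has_endpoint_def by blast
    have prev: "j = 0 \<or> i \<in> thdL (v ! (j - 1))"
    proof (cases j)
      case (Suc j')
      then have "u ! j' = v ! j'" using differ(3) by (metis lessI nth_take)
      then show ?thesis using vertex_endpoint_level_prev[OF u \<open>j \<le> b\<close> b] Suc by simp
    qed simp
    from differ(4) show ?thesis
    proof (cases rule: prec_cases)
      case nested
      have "i \<notin> fstI ?t'"
        using endpoint_nested_triple[OF wo(1) nested] vertex_endpoint_level[OF u \<open>j \<le> b\<close> b]
          not_ep unfolding triple_endpoint_def by blast
      then show ?thesis using differ(2) prev unfolding point_before_def by blast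
    next
      case empty
      \<comment> \<open>impossible: i would have to lie in the empty L_j\<close>
      then show ?thesis using vertex_endpoint_level_thdL[OF u \<open>j \<le> b\<close> b _ _ not_ep] by simp
    next
      case shifted
      have iL: "i \<in> thdL ?t"
        using vertex_endpoint_level_thdL[OF u \<open>j \<le> b\<close> b _ _ not_ep] shifted by simp
      have "i \<le> rep (thdL ?t)" using iL well_orderedD(3)[OF wo(1)] unfolding rep_def by simp
      then have lt: "i < lep (thdL ?t')" using shifted by simp
      then have "i \<notin> thdL ?t'"
        using well_orderedD(3)[OF wo(2)] unfolding lep_def by (auto dest: Min_le)
      moreover have "i \<in> fstI ?t'" "i \<notin> sndH ?t'"
        using iL well_orderedD(5,6)[OF wo(1)] shifted by auto
      ultimately show ?thesis using differ(2) shifted lt unfolding point_before_def by blast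
    qed
  qed
qed

lemma lex_less_point_after:
  assumes v: "v \<in> vertices A R B" and w: "w \<in> vertices A R B" and "lex_less v w"
    and "has_endpoint i w" and not_v: "\<not> has_endpoint i v"
  shows "point_after v i"
proof -
  obtain c where c: "c < length w" "triple_endpoint i (w ! c)"
    using assms(4) unfolding has_endpoint_def by blast
  from \<open>lex_less v w\<close> show ?thesis
  proof (cases rule: lex_less_cases)
    case prefix
    define k where "k = length v - 1"
    have k: "k < length v" using verticesD(1)[OF v] k_def by simp
    have "length v \<le> c" using has_endpoint_take[OF prefix(2)[symmetric] _ _ c] not_v by force
    then have "i \<in> thdL (w ! k)" using vertex_endpoint_level[OF w _ c, of k] k by auto
    moreover have "w ! k = v ! k" using prefix(2) k by (metis nth_take)
    ultimately show ?thesis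
      using verticesD(1)[OF v] unfolding point_after_def k_def by (simp add: last_conv_nth)
  next
    case (differ j)
    let ?t = "v ! j" and ?t' = "w ! j"
    have "j \<le> c" using has_endpoint_take[OF differ(3)[symmetric] _ _ c] differ(1) not_v by force
    have wo: "well_ordered ?t" "well_ordered ?t'"
      using verticesD(3)[OF v] verticesD(3)[OF w] differ(1,2) by auto
    have not_ep: "\<not> triple_endpoint i ?t" using not_v differ(1) unfolding has_endpoint_def by blast
    from differ(4) show ?thesis
    proof (cases rule: prec_cases)
      case nested
      have "i \<in> sndH ?t" using vertex_endpoint_level_fstI[OF w \<open>j \<le> c\<close> c] nested by blast
      then show ?thesis
        using differ(1) well_orderedD(4,6)[OF wo(1)] unfolding point_after_def by blast
    next
      case empty
      have "i \<in> thdL ?t'"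
        using vertex_endpoint_level_thdL[OF w \<open>j \<le> c\<close> c _ _ not_ep] empty by simp
      then have "i \<in> fstI ?t" using empty well_orderedD(5)[OF wo(2)] by auto
      then show ?thesis using differ(1) empty unfolding point_after_def by auto
    next
      case shifted
      have iL: "i \<in> thdL ?t'"
        using vertex_endpoint_level_thdL[OF w \<open>j \<le> c\<close> c _ _ not_ep] shifted by simp
      have "lep (thdL ?t') \<le> i" using iL well_orderedD(3)[OF wo(2)] unfolding lep_def by simp
      then have lt: "rep (thdL ?t) < i" using shifted by simp
      then have "i \<notin> thdL ?t"
        using well_orderedD(3)[OF wo(1)] unfolding rep_def by (auto dest: Max_ge)
      moreover have "i \<in> fstI ?t" using iL well_orderedD(5)[OF wo(2)] shifted by auto
      ultimately show ?thesis using differ(1) lt unfolding point_after_def by blast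
    qed
  qed
qed

lemma not_point_before_and_after:
  assumes v: "v \<in> vertices A R B" and before: "point_before v i" and after: "point_after v i"
  shows False
proof -
  have wo: "\<And>j. j < length v \<Longrightarrow> well_ordered (v ! j)" using verticesD(3)[OF v] .
  from after consider (last) "i \<in> thdL (v ! (length v - 1))"
    | (exit) m where "m < length v" "i \<in> fstI (v ! m)" "i \<notin> thdL (v ! m)"
        "i \<in> sndH (v ! m) \<or> thdL (v ! m) = {} \<or> rep (thdL (v ! m)) < i"
    unfolding point_after_def using verticesD(1)[OF v] by (auto simp: last_conv_nth)
  then show False
  proof cases
    case last
    have "i \<in> thdL (v ! j)" if "j < length v" for j
      using vertex_thdL_antimono[OF v _ _ last] that by simp
    then show False using before well_orderedD(5)[OF wo] unfolding point_before_def by blast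
  next
    case (exit m)
    from before consider
      (outside) j where "j < length v" "i \<notin> fstI (v ! j)" "j = 0 \<or> i \<in> thdL (v ! (j - 1))"
    | (left) j where "j < length v" "i \<in> fstI (v ! j)" "i \<notin> sndH (v ! j)" "i \<notin> thdL (v ! j)"
        "thdL (v ! j) \<noteq> {}" "i < lep (thdL (v ! j))"
      unfolding point_before_def by blast
    then show False
    proof cases
      case (outside j)
      have "m < j" using vertex_fstI_antimono[OF v _ exit(1,2), of j] outside(2) by fastforce
      then have "i \<in> thdL (v ! (j - 1))" using outside(3) by simp
      then have "i \<in> thdL (v ! m)"
        using vertex_thdL_antimono[OF v, of m "j - 1"] \<open>m < j\<close> outside(1) by simp
      then show False using exit(3) by blast
    next
      case (left j)
      have "j = m" using vertex_exit_level_unique[OF v left(1) exit(1) left(2,4) exit(2,3)] .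
      moreover have "lep (thdL (v ! j)) \<le> rep (thdL (v ! j))"
        using lep_le_rep well_orderedD(3)[OF wo[OF left(1)]] left(5) by blast
      ultimately show False using exit(4) left by auto
    qed
  qed
qed

lemma has_endpoint_between:
  assumes v: "v \<in> vertices A R B"
    and "Vminus A R B v \<inter> Sset A R B i \<noteq> {}" "Vplus A R B v \<inter> Sset A R B i \<noteq> {}"
  shows "has_endpoint i v"
proof (rule ccontr)
  assume not_v: "\<not> has_endpoint i v"
  obtain u where "u \<in> vertices A R B" "lex_less u v" "has_endpoint i u"
    using assms(2) unfolding Vminus_def edges_def Sset_eq by auto
  then have "point_before v i" using lex_less_point_before v not_v by blast
  moreover obtain w where "w \<in> vertices A R B" "lex_less v w" "has_endpoint i w"
    using assms(3) unfolding Vplus_def edges_def Sset_eq by auto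
  then have "point_after v i" using lex_less_point_after v not_v by blast
  ultimately show False using not_point_before_and_after[OF v] by blast
qed

lemma has_endpoint_bounded:
  shows "finite {i. has_endpoint i v}" "card {i. has_endpoint i v} \<le> 6 * length v"
proof -
  define F where "F j = set [lep (fstI (v ! j)), rep (fstI (v ! j)), lep (sndH (v ! j)),
    rep (sndH (v ! j)), lep (thdL (v ! j)), rep (thdL (v ! j))]" for j
  have sub: "{i. has_endpoint i v} \<subseteq> (\<Union>j<length v. F j)"
    unfolding has_endpoint_def triple_endpoint_def endpoint_of_def F_def by auto
  have fin: "finite (\<Union>j<length v. F j)" unfolding F_def by simp
  have "card (\<Union>j<length v. F j) \<le> (\<Sum>j<length v. card (F j))" by (rule card_UN_le) simp
  also have "\<dots> \<le> (\<Sum>j<length v. 6)"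
    by (rule sum_mono) (unfold F_def, rule order_trans[OF card_length], simp)
  finally show "finite {i. has_endpoint i v}" "card {i. has_endpoint i v} \<le> 6 * length v"
    using finite_subset[OF sub fin] card_mono[OF fin sub] by auto
qed

theorem lemma9:
  fixes A :: "'a list" and R :: "('a \<times> 'a) set" and B :: nat
  assumes "B \<ge> 1"
  shows "(\<forall>i \<in> {1..int (length A)}. \<forall>v \<in> vertices A R B.
            Vminus A R B v \<inter> Sset A R B i = {} \<or> Vplus A R B v \<inter> Sset A R B i = {} \<or>
            v \<in> Sset A R B i) \<and>
         (\<forall>v \<in> vertices A R B.
            card {i \<in> {1..int (length A)}. Vminus A R B v \<inter> Sset A R B i \<noteq> {} \<and>
                                          Vplus A R B v \<inter> Sset A R B i \<noteq> {}} \<le> 6 * B)"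
proof (intro conjI ballI)
  fix i v assume v: "v \<in> vertices A R B"
  show "Vminus A R B v \<inter> Sset A R B i = {} \<or> Vplus A R B v \<inter> Sset A R B i = {} \<or>
        v \<in> Sset A R B i"
    using has_endpoint_between[OF v] v unfolding Sset_eq by blast
next
  fix v assume v: "v \<in> vertices A R B"
  let ?N = "{i \<in> {1..int (length A)}. Vminus A R B v \<inter> Sset A R B i \<noteq> {} \<and>
                                    Vplus A R B v \<inter> Sset A R B i \<noteq> {}}"
  have "?N \<subseteq> {i. has_endpoint i v}" using has_endpoint_between[OF v] by blast
  then have "card ?N \<le> card {i. has_endpoint i v}"
    using has_endpoint_bounded(1) by (rule card_mono[rotated])
  also have "\<dots> \<le> 6 * length v" by (rule has_endpoint_bounded(2))
  also have "\<dots> \<le> 6 * B" using verticesD(2)[OF v] by simp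
  finally show "card ?N \<le> 6 * B" .
qed

end
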